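(* Let $r(t) \in \mathbb{Z}[t]$ be a good polynomial. Then $r(1) \cdot \operatorname{Cong}(r(t)) \cdot \operatorname{Discr}_\ast(r(t)) \cdot \operatorname{Prod}_\ast(r(t)) \neq 0$.
   Context: Here $\mathbb{N} = \{1,2,3,\dots\}$. A polynomial $r(t) \in \mathbb{Z}[t]$ is bad if there exist $u \in \mathbb{N}$ and $s(t) \in \mathbb{Z}[t]\setminus \mathbb{Z}$ such that $s(t^{u+1})$ divides $r(0)\cdot r(1)\cdot r(t)$ in $\mathbb{Z}[t]$; otherwise $r(t)$ is good. For $r(t) = \sum_i a_i t^i \in \mathbb{Z}[t]$ and integers $u > j \ge 0$, let $r_{u,j}(t) := \sum_{i \equiv j \bmod u} a_i t^i$. The periodic congruence number $\operatorname{Cong}(r(t))$ is the non-negative generator of the ideal $\mathbb{Z} \cap \bigcap_{1 < u \le \deg(r(t))+1} \big(r_{u,0}(t)\mathbb{Z}[t] + \cdots + r_{u,u-1}(t)\mathbb{Z}[t]\big)$ of $\mathbb{Z}$. If $r(t)$ is constant, $\operatorname{Discr}_\ast(r(t)) := r(t)$ and $\operatorname{Prod}_\ast(r(t)) := 1$. Otherwise let $d = \deg r$, $a$ the leading coefficient, $\lambda_1,\dots,\lambda_l \in \overline{\mathbb{Q}}$ the distinct roots with multiplicities $m_1,\dots,m_l$, $m = \max_i m_i$, and set $\operatorname{Discr}_\ast(r(t)) := a^{1+2d^2}\,(m-1)!\,\prod_{1\le i\ne j\le l}(\lambda_i-\lambda_j)^m$ and $\operatorname{Prod}_\ast(r(t))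 := a^{2d^3}\prod_{1\le i,j\le l,\ r(\lambda_i\lambda_j)\neq 0} r(\lambda_i\lambda_j)$. *)

theory Defs
  imports "HOL-Computational_Algebra.Polynomial" Complex_Main
begin

definition bad_poly :: "int poly \<Rightarrow> bool" where
  "bad_poly r \<longleftrightarrow> (\<exists>u::nat. u \<ge> 1 \<and> (\<exists>s::int poly. degree s > 0 \<and>
      pcompose s (monom 1 (u + 1)) dvd smult (poly r 0 * poly r 1) r))"

definition good_poly :: "int poly \<Rightarrow> bool" where
  "good_poly r \<longleftrightarrow> \<not> bad_poly r"

definition part_poly :: "int poly \<Rightarrow> nat \<Rightarrow> nat \<Rightarrow> int poly" where
  "part_poly r u j = (\<Sum>i\<le>degree r. if i mod u = j then monom (coeff r i) i else 0)"

definition part_ideal :: "int poly \<Rightarrow> nat \<Rightarrow> int poly set" where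
  "part_ideal r u = {p. \<exists>q :: nat \<Rightarrow> int poly. p = (\<Sum>j<u. part_poly r u j * q j)}"

definition cong_ideal :: "int poly \<Rightarrow> int set" where
  "cong_ideal r = {c. \<forall>u. 1 < u \<and> u \<le> degree r + 1 \<longrightarrow> [:c:] \<in> part_ideal r u}"

definition Cong :: "int poly \<Rightarrow> int" where
  "Cong r = (THE g. g \<ge> 0 \<and> cong_ideal r = {c. g dvd c})"

text \<open>Roots are taken in the algebraically closed field C (containing the
  algebraic closure of Q).\<close>
definition croots :: "int poly \<Rightarrow> complex set" where
  "croots r = {z. poly (map_poly of_int r) z = 0}"

definition max_mult :: "int poly \<Rightarrow> nat" where
  "max_mult r = Max ((\<lambda>z. order z (map_poly (of_int :: int \<Rightarrow> complex) r)) ` croots r)"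

definition Discr_star :: "int poly \<Rightarrow> complex" where
  "Discr_star r = (if degree r = 0 then of_int (coeff r 0) else
     of_int (lead_coeff r) ^ (1 + 2 * (degree r)\<^sup>2) * of_nat (fact (max_mult r - 1)) *
     (\<Prod>(x, y) \<in> {(x, y). x \<in> croots r \<and> y \<in> croots r \<and> x \<noteq> y}. (x - y) ^ max_mult r))"

definition Prod_star :: "int poly \<Rightarrow> complex" where
  "Prod_star r = (if degree r = 0 then 1 else
     of_int (lead_coeff r) ^ (2 * degree r ^ 3) *
     (\<Prod>(x, y) \<in> {(x, y). x \<in> croots r \<and> y \<in> croots r \<and>
                          poly (map_poly of_int r) (x * y) \<noteq> 0}.
        poly (map_poly of_int r) (x * y)))"

end

theory Submission
  imports Defs "Berlekamp_Zassenhaus.Factor_Bound"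
begin

text \<open>
  A good polynomial has r(0) r(1) \<noteq> 0, since otherwise every s(t^(u+1)) divides
  r(0) r(1) r(t) = 0. In particular r \<noteq> 0, so Discr_* and Prod_* are products of
  nonzero factors, and everything comes down to Cong r \<noteq> 0.

  Fix u > 1 and write r_{u,j}(t) = t^j g_j(t^u). A common nonconstant factor s of
  the g_j would give s(t^u) | r, which goodness forbids. So the g_j are coprime over
  Q, and a Bezout relation with denominators cleared yields an integer D \<noteq> 0 with
  D t^u in the ideal generated by the r_{u,j}. As r_{u,0} \<equiv> r(0) modulo t,
  also r(0)^u \<in> (r_{u,0}) + (t^u), so D r(0)^u is a nonzero constant of that
  ideal. The product of these constants over all u is a nonzero element of the
  ideal of Z whose generator is Cong r.
\<close>

hide_const (open) module.smult UnivPoly.monom up_ring.coeff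

lemma pcompose_monom: "pcompose (monom c n) q = smult c (q ^ n)"
  by (induction n) (simp_all add: pcompose_pCons monom_Suc monom_0)

lemma prod_nonzero: "(\<And>x. x \<in> A \<Longrightarrow> f x \<noteq> 0) \<Longrightarrow> prod f A \<noteq> (0 :: 'a :: semidom)"
  by (cases "finite A") auto

lemma Gcd_image_lessThan_eq_linear_combination:
  fixes F :: "nat \<Rightarrow> 'a :: euclidean_ring_gcd"
  shows "\<exists>h. Gcd (F ` {..<n}) = (\<Sum>j<n. F j * h j)"
proof (induction n)
  case (Suc n)
  then obtain h where h: "Gcd (F ` {..<n}) = (\<Sum>j<n. F j * h j)" by blast
  obtain a b where ab: "gcd (F n) (Gcd (F ` {..<n})) = a * F n + b * Gcd (F ` {..<n})"
    by (metis bezout_coefficients_fst_snd)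
  have "Gcd (F ` {..<Suc n}) = gcd (F n) (Gcd (F ` {..<n}))"
    by (simp add: lessThan_Suc)
  also have "\<dots> = a * F n + b * Gcd (F ` {..<n})"
    by (fact ab)
  also have "\<dots> = (\<Sum>j<Suc n. F j * (if j = n then a else b * h j))"
    by (simp add: h sum_distrib_left algebra_simps)
  finally show ?case by (intro exI[of _ "\<lambda>j. if j = n then a else b * h j"])
qed simp

lemma rat_poly_family_common_denominator:
  fixes h :: "nat \<Rightarrow> rat poly"
  shows "\<exists>D > 0. \<exists>H. \<forall>j<n. of_int_poly (H j) = smult (of_int D) (h j)"
proof (induction n)
  case (Suc n)
  then obtain D H where D: "D > 0" and H: "\<forall>j<n. of_int_poly (H j) = smult (of_int D) (h j)"
    by blast
  obtain d q where dq: "rat_to_int_poly (h n) = (d, q)" by force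
  have hn: "h n = smult (inverse (of_int d)) (of_int_poly q)" and d: "d > 0"
    using rat_to_int_poly[OF dq] by auto
  define H' where "H' j = (if j = n then smult D q else smult d (H j))" for j
  have "of_int_poly (H' j) = smult (of_int (D * d)) (h j)" if "j < Suc n" for j
    using H that d by (auto simp: H'_def hn of_int_hom.map_poly_hom_smult field_simps)
  then show ?case using D d by (intro exI[of _ "D * d"]) auto
qed (auto intro: exI[of _ 1])

lemma int_poly_family_common_factor_or_bezout:
  fixes g :: "nat \<Rightarrow> int poly"
  assumes "j0 < n" and "g j0 \<noteq> 0"
  shows "(\<exists>s. degree s > 0 \<and> (\<forall>j<n. s dvd g j)) \<or> (\<exists>D H. D \<noteq> 0 \<and> [:D:] = (\<Sum>j<n. g j * H j))"
proof -
  define G where "G = Gcd ((\<lambda>j. of_int_poly (g j) :: rat poly) ` {..<n})"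
  have G_dvd: "G dvd of_int_poly (g j)" if "j < n" for j
    unfolding G_def using that by (intro Gcd_dvd) auto
  show ?thesis
  proof (cases "degree G = 0")
    case False
    obtain c s where cs: "rat_to_normalized_int_poly G = (c, s)" by force
    have "degree s > 0" using rat_to_normalized_int_poly(4)[OF cs] False by simp
    moreover have "s dvd g j" if j: "j < n" for j
    proof -
      obtain k where "of_int_poly (g j) = G * k" using G_dvd[OF j] by (auto elim: dvdE)
      \<comment> \<open>Gauss's lemma\<close>
      from rat_to_int_factor_explicit[OF this cs] obtain k' where "g j = s * smult (content (g j)) k'"
        by blast
      then show ?thesis by (rule dvdI)
    qed
    ultimately show ?thesis by blast
  next
    case True
    have "G \<noteq> 0" using assms unfolding G_def by (auto simp: Gcd_0_iff)
    obtain c where c: "G = [:c:]" using True by (rule degree_eq_zeroE)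
    with \<open>G \<noteq> 0\<close> have c_nonzero: "c \<noteq> 0" by simp
    obtain h where h: "G = (\<Sum>j<n. of_int_poly (g j) * h j)"
      unfolding G_def using Gcd_image_lessThan_eq_linear_combination[of "\<lambda>j. of_int_poly (g j)" n]
      by blast
    obtain D H where D: "D > 0"
      and H: "\<forall>j<n. of_int_poly (H j) = smult (of_int D) (smult (inverse c) (h j))"
      using rat_poly_family_common_denominator[of n "\<lambda>j. smult (inverse c) (h j)"] by blast
    have "of_int_poly [:D:] = smult (of_int D) (smult (inverse c) G)"
      using c c_nonzero by (simp add: of_int_hom.map_poly_pCons_hom)
    also have "\<dots> = (\<Sum>j<n. of_int_poly (g j) * of_int_poly (H j))"
      unfolding h using H by (auto simp: smult_sum2 mult_smult_right intro!: sum.cong)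
    also have "\<dots> = of_int_poly (\<Sum>j<n. g j * H j)"
      by (simp add: of_int_poly_hom.hom_sum of_int_poly_hom.hom_mult)
    finally have "[:D:] = (\<Sum>j<n. g j * H j)" by simp
    with D show ?thesis by (intro disjI2 exI[of _ D] exI[of _ H]) simp
  qed
qed

lemma const_power_eq_monom_mult_plus_mult:
  fixes p :: "'a :: comm_ring_1 poly"
  shows "\<exists>m S. [:poly p 0 ^ u:] = monom 1 u * m + p * S"
proof -
  define y where "y = [:poly p 0:] - p"
  have "poly y 0 = 0" unfolding y_def by simp
  then have "[:0, 1:] dvd y" using poly_eq_0_iff_dvd[of y 0] by simp
  then have "[:0, 1:] ^ u dvd y ^ u" by (rule dvd_power_same)
  then obtain m where m: "y ^ u = monom 1 u * m" by (auto simp: monom_altdef elim: dvdE)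
  define S where "S = (\<Sum>i<u. y ^ (u - Suc i) * [:poly p 0:] ^ i)"
  have "[:poly p 0:] ^ u - y ^ u = ([:poly p 0:] - y) * S"
    unfolding S_def by (rule power_diff_sumr2)
  also have "[:poly p 0:] - y = p" unfolding y_def by simp
  finally have diff: "[:poly p 0:] ^ u - y ^ u = p * S" .
  have "[:poly p 0 ^ u:] = y ^ u + ([:poly p 0:] ^ u - y ^ u)"
    by (simp add: poly_const_pow)
  also have "\<dots> = monom 1 u * m + p * S"
    using diff m by simp
  finally show ?thesis by blast
qed

lemma int_ideal_eq_multiples:
  fixes S :: "int set"
  assumes add: "\<And>a b. a \<in> S \<Longrightarrow> b \<in> S \<Longrightarrow> a + b \<in> S"
    and mult: "\<And>a k. a \<in> S \<Longrightarrow> k * a \<in> S"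
    and "x \<in> S" and "x \<noteq> 0"
  shows "\<exists>g > 0. S = {c. g dvd c}"
proof -
  define P where "P n \<longleftrightarrow> n > 0 \<and> int n \<in> S" for n
  have "\<bar>x\<bar> \<in> S" using mult[OF \<open>x \<in> S\<close>, of "sgn x"] by (simp add: abs_sgn mult.commute)
  with \<open>x \<noteq> 0\<close> have "P (nat \<bar>x\<bar>)" unfolding P_def by simp
  then have n: "P (LEAST n. P n)" by (rule LeastI)
  define g where "g = int (LEAST n. P n)"
  have g: "g > 0" "g \<in> S" using n unfolding P_def g_def by auto
  have "g dvd c" if c: "c \<in> S" for c
  proof (rule ccontr)
    assume "\<not> g dvd c"
    then have "c mod g \<noteq> 0" by (simp add: dvd_eq_mod_eq_0)
    with g(1) have "0 < c mod g" using pos_mod_sign[of g c] by linarith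
    moreover have "c mod g \<in> S"
      using add[OF c mult[OF g(2), of "- (c div g)"]] by (simp add: minus_div_mult_eq_mod [symmetric])
    ultimately have "(LEAST n. P n) \<le> nat (c mod g)" unfolding P_def by (intro Least_le) simp
    with \<open>0 < c mod g\<close> have "g \<le> c mod g" unfolding g_def by linarith
    with g(1) show False using pos_mod_bound[of g c] by linarith
  qed
  moreover have "c \<in> S" if "g dvd c" for c
    using that mult[OF g(2)] by (auto elim: dvdE simp: mult.commute)
  ultimately show ?thesis using g(1) by blast
qed

lemma coeff_part_poly: "coeff (part_poly r u j) n = (if n mod u = j then coeff r n else 0)"
proof -
  have "coeff (part_poly r u j) n = (\<Sum>i\<le>degree r. if i mod u = j \<and> i = n then coeff r i else 0)"
    unfolding part_poly_def coeff_sum by (intro sum.cong) (auto simp: coeff_monom)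
  also have "\<dots> = (if n mod u = j then coeff r n else 0)"
  proof (cases "n \<le> degree r")
    case True
    have "(\<Sum>i\<le>degree r. if i mod u = j \<and> i = n then coeff r i else 0)
       = (\<Sum>i\<le>degree r. if i = n then (if n mod u = j then coeff r n else 0) else 0)"
      by (intro sum.cong) auto
    then show ?thesis using True by (simp add: sum.delta)
  qed (auto simp: coeff_eq_0 intro!: sum.neutral)
  finally show ?thesis .
qed

lemma poly_part_poly_0_0: "poly (part_poly r u 0) 0 = poly r 0"
  by (simp add: poly_0_coeff_0 coeff_part_poly)

lemma sum_part_poly:
  assumes "u > 0"
  shows "(\<Sum>j<u. part_poly r u j) = r"
proof (rule poly_eqI)
  fix n
  have "coeff (\<Sum>j<u. part_poly r u j) n = (\<Sum>j<u. if n mod u = j then coeff r n else 0)"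
    by (simp add: coeff_sum coeff_part_poly)
  also have "\<dots> = coeff r n" using assms by simp
  finally show "coeff (\<Sum>j<u. part_poly r u j) n = coeff r n" .
qed

definition part_base :: "int poly \<Rightarrow> nat \<Rightarrow> nat \<Rightarrow> int poly" where
  "part_base r u j = (\<Sum>i\<le>degree r. if i mod u = j then monom (coeff r i) (i div u) else 0)"

lemma part_poly_eq_monom_mult_pcompose_part_base:
  assumes "j < u"
  shows "part_poly r u j = monom 1 j * pcompose (part_base r u j) (monom 1 u)"
proof -
  have "monom 1 j * pcompose (if i mod u = j then monom (coeff r i) (i div u) else 0) (monom 1 u)
      = (if i mod u = j then monom (coeff r i) i else 0)" for i
  proof (cases "i mod u = j")
    case True
    then have "j + u * (i div u) = i" by (metis mod_mult_div_eq add.commute)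
    with True show ?thesis
      by (simp add: pcompose_monom monom_power mult_monom mult.commute smult_monom)
  qed simp
  then show ?thesis
    unfolding part_poly_def part_base_def pcompose_sum sum_distrib_left by simp
qed

lemma poly_part_base_0_0:
  assumes "u > 0"
  shows "poly (part_base r u 0) 0 = poly r 0"
  using part_poly_eq_monom_mult_pcompose_part_base[OF assms, of r] poly_part_poly_0_0[of r u] assms
  by (simp add: poly_pcompose poly_monom zero_power)

lemma pcompose_monom_dvd_if_dvd_part_base:
  assumes "u > 0" and "\<And>j. j < u \<Longrightarrow> s dvd part_base r u j"
  shows "pcompose s (monom 1 u) dvd r"
proof -
  have "pcompose s (monom 1 u) dvd part_poly r u j" if j: "j < u" for j
  proof -
    obtain k where "part_base r u j = s * k" using assms(2)[OF j] by (auto elim: dvdE)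
    then have "part_poly r u j = pcompose s (monom 1 u) * (monom 1 j * pcompose k (monom 1 u))"
      using part_poly_eq_monom_mult_pcompose_part_base[OF j] by (simp add: pcompose_mult ac_simps)
    then show ?thesis by (rule dvdI)
  qed
  then have "pcompose s (monom 1 u) dvd (\<Sum>j<u. part_poly r u j)" by (intro dvd_sum) auto
  then show ?thesis using sum_part_poly[OF assms(1)] by simp
qed

lemma part_ideal_add:
  assumes "a \<in> part_ideal r u" and "b \<in> part_ideal r u"
  shows "a + b \<in> part_ideal r u"
proof -
  obtain qa qb where "a = (\<Sum>j<u. part_poly r u j * qa j)" "b = (\<Sum>j<u. part_poly r u j * qb j)"
    using assms unfolding part_ideal_def by auto
  then have "a + b = (\<Sum>j<u. part_poly r u j * (qa j + qb j))"
    by (simp add: distrib_left sum.distrib)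
  then show ?thesis unfolding part_ideal_def by (intro CollectI exI[of _ "\<lambda>j. qa j + qb j"])
qed

lemma part_ideal_mult:
  assumes "a \<in> part_ideal r u"
  shows "a * k \<in> part_ideal r u"
proof -
  obtain qa where "a = (\<Sum>j<u. part_poly r u j * qa j)"
    using assms unfolding part_ideal_def by auto
  then have "a * k = (\<Sum>j<u. part_poly r u j * (qa j * k))"
    by (simp add: sum_distrib_right mult.assoc)
  then show ?thesis unfolding part_ideal_def by (intro CollectI exI[of _ "\<lambda>j. qa j * k"])
qed

lemma part_poly_in_part_ideal:
  assumes "j < u"
  shows "part_poly r u j \<in> part_ideal r u"
proof -
  have "part_poly r u j = (\<Sum>i<u. part_poly r u i * (if i = j then 1 else 0))"
    using assms by (simp add: if_distrib sum.delta cong: if_cong)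
  then show ?thesis unfolding part_ideal_def by (intro CollectI exI[of _ "\<lambda>i. if i = j then 1 else 0"])
qed

lemma smult_monom_in_part_ideal:
  assumes "[:D:] = (\<Sum>j<u. part_base r u j * H j)"
  shows "smult D (monom 1 u) \<in> part_ideal r u"
proof -
  let ?X = "monom 1 u :: int poly"
  have "(\<Sum>j<u. part_poly r u j * (monom 1 (u - j) * pcompose (H j) ?X))
      = (\<Sum>j<u. ?X * pcompose (part_base r u j * H j) ?X)"
  proof (intro sum.cong refl)
    fix j assume "j \<in> {..<u}"
    then have j: "j < u" by simp
    have "part_poly r u j * (monom 1 (u - j) * pcompose (H j) ?X)
        = (monom 1 j * monom 1 (u - j)) * (pcompose (part_base r u j) ?X * pcompose (H j) ?X)"
      unfolding part_poly_eq_monom_mult_pcompose_part_base[OF j] by (simp only: ac_simps)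
    also have "\<dots> = ?X * pcompose (part_base r u j * H j) ?X"
      using j by (simp add: mult_monom pcompose_mult)
    finally show "part_poly r u j * (monom 1 (u - j) * pcompose (H j) ?X)
        = ?X * pcompose (part_base r u j * H j) ?X" .
  qed
  also have "\<dots> = ?X * pcompose [:D:] ?X" unfolding assms pcompose_sum sum_distrib_left ..
  also have "\<dots> = smult D ?X" by simp
  finally show ?thesis unfolding part_ideal_def
    by (intro CollectI exI[of _ "\<lambda>j. monom 1 (u - j) * pcompose (H j) ?X"]) simp
qed

lemma part_ideal_contains_nonzero_const:
  assumes "u > 0" and "poly r 0 \<noteq> 0"
    and "\<And>s. degree s > 0 \<Longrightarrow> \<not> pcompose s (monom 1 u) dvd r"
  shows "\<exists>c. c \<noteq> 0 \<and> [:c:] \<in> part_ideal r u"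
proof -
  have "part_base r u 0 \<noteq> 0" using poly_part_base_0_0[OF assms(1), of r] assms(2) by auto
  then consider (common_factor) s where "degree s > 0" "\<And>j. j < u \<Longrightarrow> s dvd part_base r u j"
    | (bezout) D H where "D \<noteq> 0" "[:D:] = (\<Sum>j<u. part_base r u j * H j)"
    using int_poly_family_common_factor_or_bezout[of 0 u "part_base r u"] assms(1) by blast
  then show ?thesis
  proof cases
    case common_factor
    then show ?thesis using assms(3) pcompose_monom_dvd_if_dvd_part_base[OF assms(1)] by blast
  next
    case bezout
    obtain m S where mS: "[:poly r 0 ^ u:] = monom 1 u * m + part_poly r u 0 * S"
      using const_power_eq_monom_mult_plus_mult[of "part_poly r u 0" u]
      unfolding poly_part_poly_0_0 by blast
    have "[:D * poly r 0 ^ u:] = smult D [:poly r 0 ^ u:]" by simp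
    also have "\<dots> = smult D (monom 1 u) * m + part_poly r u 0 * smult D S"
      unfolding mS by (simp add: smult_add_right mult_smult_left mult_smult_right)
    also have "\<dots> \<in> part_ideal r u"
      using smult_monom_in_part_ideal[OF bezout(2)] part_poly_in_part_ideal[OF assms(1)]
      by (intro part_ideal_add part_ideal_mult)
    finally show ?thesis using bezout(1) assms(2) by (intro exI[of _ "D * poly r 0 ^ u"]) simp
  qed
qed

lemma Cong_eqI:
  assumes "g \<ge> 0" and "cong_ideal r = {c. g dvd c}"
  shows "Cong r = g"
  unfolding Cong_def
proof (rule the_equality)
  fix g' assume g': "0 \<le> g' \<and> cong_ideal r = {c. g' dvd c}"
  then have "{c. g' dvd c} = {c. g dvd c}" using assms(2) by simp
  then have "g' dvd g" "g dvd g'" by (simp_all add: set_eq_iff) (metis dvd_refl)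
  with assms(1) g' show "g' = g" by (simp add: zdvd_antisym_nonneg)
qed (use assms in simp)

lemma Cong_nonzero:
  assumes "c \<in> cong_ideal r" and "c \<noteq> 0"
  shows "Cong r \<noteq> 0"
proof -
  have "a + b \<in> cong_ideal r" if "a \<in> cong_ideal r" "b \<in> cong_ideal r" for a b
    using that part_ideal_add[of "[:a:]" r _ "[:b:]"] unfolding cong_ideal_def by auto
  moreover have "k * a \<in> cong_ideal r" if "a \<in> cong_ideal r" for a k
    using that part_ideal_mult[of "[:a:]" r _ "[:k:]"] unfolding cong_ideal_def by (auto simp: mult.commute)
  ultimately obtain g where "g > 0" "cong_ideal r = {c. g dvd c}"
    using int_ideal_eq_multiples[of "cong_ideal r" c] assms by blast
  then show ?thesis using Cong_eqI[of g r] by simp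
qed

lemma good_poly_poly_0_1_nonzero:
  assumes "good_poly r"
  shows "poly r 0 \<noteq> 0" and "poly r 1 \<noteq> 0"
proof -
  have "poly r 0 * poly r 1 \<noteq> 0"
  proof
    assume "poly r 0 * poly r 1 = 0"
    then have "pcompose [:0, 1:] (monom 1 (1 + 1)) dvd smult (poly r 0 * poly r 1) r"
      by (simp only: smult_0_left dvd_0_right)
    then have "bad_poly r" unfolding bad_poly_def by (intro exI[of _ 1] conjI exI[of _ "[:0, 1:]"]) auto
    with assms show False unfolding good_poly_def by simp
  qed
  then show "poly r 0 \<noteq> 0" and "poly r 1 \<noteq> 0" by auto
qed

lemma good_poly_not_pcompose_monom_dvd:
  assumes "good_poly r" and "2 \<le> u" and "degree s > 0"
  shows "\<not> pcompose s (monom 1 u) dvd r"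
proof
  assume "pcompose s (monom 1 u) dvd r"
  then have "pcompose s (monom 1 ((u - 1) + 1)) dvd smult (poly r 0 * poly r 1) r"
    using assms(2) by (simp add: dvd_smult)
  then have "bad_poly r" unfolding bad_poly_def using assms(2,3)
    by (intro exI[of _ "u - 1"] conjI exI[of _ s]) auto
  with assms(1) show False unfolding good_poly_def by simp
qed

lemma good_poly_Cong_nonzero:
  assumes "good_poly r"
  shows "Cong r \<noteq> 0"
proof -
  define U where "U = {2..degree r + 1}"
  have "\<exists>c. c \<noteq> 0 \<and> [:c:] \<in> part_ideal r u" if "u \<in> U" for u
    using that good_poly_poly_0_1_nonzero(1)[OF assms] good_poly_not_pcompose_monom_dvd[OF assms]
    unfolding U_def by (intro part_ideal_contains_nonzero_const) auto
  then obtain c where c: "\<And>u. u \<in> U \<Longrightarrow> c u \<noteq> 0 \<and> [:c u:] \<in> part_ideal r u" by metis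
  have "(\<Prod>u\<in>U. c u) \<in> cong_ideal r"
    unfolding cong_ideal_def
  proof (intro CollectI allI impI)
    fix u assume "1 < u \<and> u \<le> degree r + 1"
    then have u: "u \<in> U" unfolding U_def by auto
    have "[:\<Prod>u\<in>U. c u:] = [:c u:] * [:\<Prod>v\<in>U - {u}. c v:]"
      using prod.remove[OF _ u, of c] unfolding U_def by simp
    also have "\<dots> \<in> part_ideal r u" using c[OF u] by (blast intro: part_ideal_mult)
    finally show "[:\<Prod>u\<in>U. c u:] \<in> part_ideal r u" .
  qed
  moreover have "(\<Prod>u\<in>U. c u) \<noteq> 0" using c by (intro prod_nonzero) auto
  ultimately show ?thesis by (rule Cong_nonzero)
qed

lemma Discr_star_nonzero:
  assumes "r \<noteq> 0"
  shows "Discr_star r \<noteq> 0"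
proof (cases "degree r = 0")
  case True
  with assms show ?thesis unfolding Discr_star_def by (auto elim: degree_eq_zeroE)
next
  case False
  have "(\<Prod>(x, y) \<in> {(x, y). x \<in> croots r \<and> y \<in> croots r \<and> x \<noteq> y}. (x - y) ^ max_mult r) \<noteq> 0"
    by (rule prod_nonzero) auto
  with False assms show ?thesis unfolding Discr_star_def by simp
qed

lemma Prod_star_nonzero: "Prod_star r \<noteq> 0"
proof (cases "degree r = 0")
  case False
  then have "r \<noteq> 0" by auto
  moreover have "(\<Prod>(x, y) \<in> {(x, y). x \<in> croots r \<and> y \<in> croots r \<and>
                          poly (map_poly of_int r) (x * y) \<noteq> 0}.
        poly (map_poly (of_int :: int \<Rightarrow> complex) r) (x * y)) \<noteq> 0"
    by (rule prod_nonzero) auto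
  ultimately show ?thesis using False unfolding Prod_star_def by simp
qed (simp add: Prod_star_def)

theorem proposition1p9:
  fixes r :: "int poly"
  assumes "good_poly r"
  shows "of_int (poly r 1 * Cong r) * Discr_star r * Prod_star r \<noteq> 0"
proof -
  have "r \<noteq> 0" using good_poly_poly_0_1_nonzero(1)[OF assms] by auto
  then show ?thesis
    using good_poly_poly_0_1_nonzero(2)[OF assms] good_poly_Cong_nonzero[OF assms]
      Discr_star_nonzero Prod_star_nonzero[of r]
    by simp
qed

end
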